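(* Let $f:\mathbb{F}_2^n\to\mathbb{F}_2^n$ be a nonsingular linear transformation and let $M$ be its matrix with respect to the standard basis. Then $f$ is closed neighbor balanced if and only if every row of $M$ contains exactly $(n+1)/2$ entries equal to $1$.
   Context: $Q_n$ is the hypercube on $\mathbb{F}_2^n$ (adjacency iff differing in exactly one coordinate); the closed neighborhood of $\boldsymbol{u}$ is $N[\boldsymbol{u}]=\{\boldsymbol{u}\}\cup\{\boldsymbol{u}+\boldsymbol{e}_j: j=1,\dots,n\}$, where $\boldsymbol{e}_j$ are the standard basis vectors. A subset $A\subseteq\mathbb{F}_2^n$ is balanced if for every coordinate $i$, the number of $\boldsymbol{a}\in A$ with $a_i=1$ equals $|A|/2$. A bijection $f:\mathbb{F}_2^n\to\mathbb{F}_2^n$ is closed neighbor balanced if $f(N[\boldsymbol{u}])$ is balanced for every $\boldsymbol{u}\in\mathbb{F}_2^n$. *)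

theory Defs
  imports "HOL-Analysis.Analysis" "HOL-Library.Z2"
begin

definition closed_nbhd :: "bit ^ 'n \<Rightarrow> (bit ^ 'n) set" where
  "closed_nbhd u = {u} \<union> {u + axis j 1 | j. True}"

definition balanced :: "(bit ^ 'n) set \<Rightarrow> bool" where
  "balanced A \<longleftrightarrow> (\<forall>i. 2 * card {a \<in> A. a $ i = 1} = card A)"

definition closed_neighbor_balanced :: "(bit ^ 'n \<Rightarrow> bit ^ 'n) \<Rightarrow> bool" where
  "closed_neighbor_balanced f \<longleftrightarrow> bij f \<and> (\<forall>u. balanced (f ` closed_nbhd u))"

end

theory Submission
  imports Defs
begin

text \<open>Counting a neighbourhood through the injective map f, the image of N[u] has a 1 in
  coordinate i at f u exactly when f u has one, and at f (u + e_j) = f u + M e_j exactly when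
  (f u)_i + M_ij = 1. So if (f u)_i = 0 the count is the number r_i of ones in row i, and if
  (f u)_i = 1 it is 1 + (n - r_i); out of n + 1 points, both are balanced iff 2 r_i = n + 1.
  In particular the condition does not depend on u.\<close>

lemma closed_nbhd_eq_insert: "closed_nbhd u = insert u (range (\<lambda>j. u + axis j 1))"
  by (auto simp: closed_nbhd_def)

lemma add_axis_one_neq: "u + axis j (1::bit) \<noteq> u"
  by (simp add: axis_eq_0_iff)

lemma inj_add_axis_one: "inj (\<lambda>j. u + axis j (1::bit))"
  by (rule injI) (simp add: axis_eq_axis)

lemma card_closed_nbhd_filter:
  fixes u :: "bit ^ 'n"
  shows "card {x \<in> closed_nbhd u. P x} = (if P u then 1 else 0) + card {j. P (u + axis j 1)}"
proof -
  define g where "g j = u + axis j 1" for j :: 'n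
  have "{x \<in> closed_nbhd u. P x} = (if P u then insert u else id) (g ` {j. P (g j)})"
    by (auto simp: closed_nbhd_eq_insert g_def)
  moreover have "u \<notin> g ` A" for A
    by (auto simp: g_def add_axis_one_neq)
  moreover have "card (g ` {j. P (g j)}) = card {j. P (g j)}"
    using inj_add_axis_one by (auto simp: g_def intro: card_image inj_on_subset)
  ultimately show ?thesis
    by (simp add: g_def)
qed

lemma card_closed_nbhd: "card (closed_nbhd (u :: bit ^ 'n)) = CARD('n) + 1"
  using card_closed_nbhd_filter[of u "\<lambda>_. True"] by simp

lemma card_bit_add_eq_one:
  fixes c :: "'a::finite \<Rightarrow> bit"
  shows "card {j. b + c j = 1} = (if b = 1 then CARD('a) - card {j. c j = 1} else card {j. c j = 1})"
proof (cases "b = 1")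
  case True
  then have "{j. b + c j = 1} = UNIV - {j. c j = 1}"
    by auto
  with True show ?thesis
    by (simp add: card_Diff_subset)
qed simp

lemma linear_add_axis_component:
  assumes "Vector_Spaces.linear (*s) (*s) f"
  shows "f (u + axis j 1) $ i = f u $ i + matrix f $ i $ j"
  by (simp add: vec.linear_add[OF assms] matrix_def)

lemma card_image_closed_nbhd_component:
  fixes f :: "bit ^ 'n \<Rightarrow> bit ^ 'n"
  assumes lin: "Vector_Spaces.linear (*s) (*s) f" and "inj f"
  shows "card {a \<in> f ` closed_nbhd u. a $ i = 1} =
    (if f u $ i = 1 then 1 + (CARD('n) - card {j. matrix f $ i $ j = 1})
     else card {j. matrix f $ i $ j = 1})"
proof -
  have "{a \<in> f ` closed_nbhd u. a $ i = 1} = f ` {x \<in> closed_nbhd u. f x $ i = 1}"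
    by auto
  then have "card {a \<in> f ` closed_nbhd u. a $ i = 1} = card {x \<in> closed_nbhd u. f x $ i = 1}"
    using \<open>inj f\<close> by (simp add: card_image inj_on_subset)
  also have "\<dots> = (if f u $ i = 1 then 1 else 0) + card {j. f u $ i + matrix f $ i $ j = 1}"
    by (simp add: card_closed_nbhd_filter linear_add_axis_component[OF lin])
  finally show ?thesis
    by (simp add: card_bit_add_eq_one del: add_bit_eq_xor)
qed

lemma balanced_image_closed_nbhd_iff:
  fixes f :: "bit ^ 'n \<Rightarrow> bit ^ 'n"
  assumes "Vector_Spaces.linear (*s) (*s) f" and "inj f"
  shows "balanced (f ` closed_nbhd u) \<longleftrightarrow>
    (\<forall>i. 2 * card {j. matrix f $ i $ j = 1} = CARD('n) + 1)"
proof -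
  have row_le: "card {j. matrix f $ i $ j = 1} \<le> CARD('n)" for i
    by (rule card_mono) auto
  have "2 * card {a \<in> f ` closed_nbhd u. a $ i = 1} = CARD('n) + 1 \<longleftrightarrow>
      2 * card {j. matrix f $ i $ j = 1} = CARD('n) + 1" for i
    using row_le[of i] unfolding card_image_closed_nbhd_component[OF assms] by auto
  moreover have "card (f ` closed_nbhd u) = CARD('n) + 1"
    using \<open>inj f\<close> card_closed_nbhd by (simp add: card_image inj_on_subset)
  ultimately show ?thesis
    unfolding balanced_def by simp
qed

theorem lemma3p6:
  fixes f :: "bit ^ 'n \<Rightarrow> bit ^ 'n"
  assumes "Vector_Spaces.linear (*s) (*s) f"
    and "bij f"
  shows "closed_neighbor_balanced f \<longleftrightarrow>
           (\<forall>i. 2 * card {j. matrix f $ i $ j = 1} = CARD('n) + 1)"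
  using assms balanced_image_closed_nbhd_iff[OF assms(1) bij_is_inj[OF assms(2)]]
  unfolding closed_neighbor_balanced_def by blast

end
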